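(* Let $R$ and $R'$ be (not necessarily commutative) subrings of a $\mathbb Q$-algebra, let $\Gamma$ be an order of a number field, let $d\ge1$ be an integer and let $\Gamma'=\mathbb Z[d\Gamma]$ be the subring of $\Gamma$ generated by $d\Gamma$. Suppose $dR'\subseteq R$ and $dR\subseteq R'$. Then the number of $\Gamma$-structures on $R$ is at most $|R'/dR'|$ times the number of $\Gamma'$-structures on $R'$.
   Context: For a ring $A$ and a ring $B$, $\operatorname{Hom}(A,B)$ is the set of ring morphisms $A\to B$; the unit group $B^\times$ acts on it by conjugation. An $A$-structure on $B$ is an element of $\operatorname{Hom}(A,B)/B^\times$. *)

theory Defs
  imports Complex_Main "HOL-Library.FuncSet"
begin

definition is_subring :: "'a::ring_1 set \<Rightarrow> bool" where
  "is_subring S \<longleftrightarrow> 0 \<in> S \<and> 1 \<in> S \<and>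
     (\<forall>x\<in>S. \<forall>y\<in>S. x + y \<in> S \<and> x - y \<in> S \<and> x * y \<in> S)"

definition gen_subring :: "'a::ring_1 set \<Rightarrow> 'a set" where
  "gen_subring X = \<Inter>{T. is_subring T \<and> X \<subseteq> T}"

text \<open>A ring is a Q-algebra iff every positive integer is invertible in it.\<close>
definition Q_algebra :: "'a::ring_1 itself \<Rightarrow> bool" where
  "Q_algebra _ \<longleftrightarrow> (\<forall>n::nat. n > 0 \<longrightarrow>
      (\<exists>y::'a. of_nat n * y = 1 \<and> y * of_nat n = 1))"

text \<open>The field (the whole type) is a number field: finite-dimensional over Q.\<close>
definition number_field :: "'k::field_char_0 itself \<Rightarrow> bool" where
  "number_field _ \<longleftrightarrow> (\<exists>B::'k set. finite B \<and>
      (\<forall>x. \<exists>c. x = (\<Sum>b\<in>B. of_rat (c b) * b)))"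

definition is_order :: "'k::field_char_0 set \<Rightarrow> bool" where
  "is_order G \<longleftrightarrow> is_subring G \<and>
     (\<exists>B. finite B \<and> G = {(\<Sum>b\<in>B. of_int (c b) * b) | c. True}) \<and>
     (\<forall>x. \<exists>n::int. n \<noteq> 0 \<and> of_int n * x \<in> G)"

definition ring_homs :: "'k::ring_1 set \<Rightarrow> 'a::ring_1 set \<Rightarrow> ('k \<Rightarrow> 'a) set" where
  "ring_homs A B = {f. f \<in> A \<rightarrow>\<^sub>E B \<and> f 1 = 1 \<and>
      (\<forall>x\<in>A. \<forall>y\<in>A. f (x + y) = f x + f y \<and> f (x * y) = f x * f y)}"

definition conj_rel :: "'k::ring_1 set \<Rightarrow> 'a::ring_1 set \<Rightarrow> (('k \<Rightarrow> 'a) \<times> ('k \<Rightarrow> 'a)) set" where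
  "conj_rel A B = {(f, g). f \<in> ring_homs A B \<and> g \<in> ring_homs A B \<and>
      (\<exists>u\<in>B. \<exists>v\<in>B. u * v = 1 \<and> v * u = 1 \<and> (\<forall>x\<in>A. g x = u * f x * v))}"

definition structures :: "'k::ring_1 set \<Rightarrow> 'a::ring_1 set \<Rightarrow> ('k \<Rightarrow> 'a) set set" where
  "structures A B = ring_homs A B // conj_rel A B"

definition quot_mult :: "'a::ring_1 set \<Rightarrow> nat \<Rightarrow> 'a set set" where
  "quot_mult B d = B // {(x, y). x \<in> B \<and> y \<in> B \<and> (\<exists>r\<in>B. x - y = of_nat d * r)}"

end

theory Submission
  imports Defs
begin

text \<open>Pick a representative \<open>f\<close> of a \<open>\<Gamma>\<close>-structure on \<open>R\<close>. Since \<open>f(d\<Gamma>) \<subseteq> dR \<subseteq> R'\<close>,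
  the restriction of \<open>f\<close> is a morphism \<open>\<Gamma>' \<rightarrow> R'\<close>; with a fixed representative \<open>h\<close> of its
  conjugacy class write \<open>f = u h u\<^sup>-\<^sup>1\<close> on \<open>\<Gamma>'\<close> with \<open>u \<in> R'\<^sup>\<times>\<close>, and send the structure to
  \<open>u mod dR'\<close> together with that class. If two structures give the same data, then
  \<open>u\<^sub>1 \<equiv> u\<^sub>2\<close> modulo \<open>dR'\<close>, so \<open>w = u\<^sub>2 u\<^sub>1\<^sup>-\<^sup>1 \<in> 1 + dR' \<subseteq> R\<close> is a unit of \<open>R\<close> (with inverse
  \<open>u\<^sub>1 u\<^sub>2\<^sup>-\<^sup>1\<close>) conjugating \<open>f\<^sub>1\<close> into \<open>f\<^sub>2\<close> on \<open>\<Gamma>' \<supseteq> d\<Gamma>\<close>. As \<open>d\<close> is invertible in the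
  ambient \<open>\<rat>\<close>-algebra, \<open>w\<close> conjugates \<open>f\<^sub>1\<close> into \<open>f\<^sub>2\<close> on all of \<open>\<Gamma>\<close>.\<close>

definition unit_pair :: "'a::ring_1 set \<Rightarrow> 'a \<Rightarrow> 'a \<Rightarrow> bool" where
  "unit_pair B u v \<longleftrightarrow> u \<in> B \<and> v \<in> B \<and> u * v = 1 \<and> v * u = 1"

lemma conj_rel_iff:
  "(f, g) \<in> conj_rel A B \<longleftrightarrow> f \<in> ring_homs A B \<and> g \<in> ring_homs A B \<and>
     (\<exists>u v. unit_pair B u v \<and> (\<forall>x\<in>A. g x = u * f x * v))"
  unfolding conj_rel_def unit_pair_def by blast

lemma unit_pair_one: "is_subring B \<Longrightarrow> unit_pair B 1 1"
  unfolding unit_pair_def is_subring_def by simp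

lemma unit_pair_swap: "unit_pair B u v \<Longrightarrow> unit_pair B v u"
  unfolding unit_pair_def by blast

lemma unit_pair_mult:
  assumes "is_subring B" "unit_pair B u v" "unit_pair B u' v'"
  shows "unit_pair B (u' * u) (v * v')"
proof -
  have "u' * u * (v * v') = u' * (u * v) * v'" "v * v' * (u' * u) = v * (v' * u') * u"
    by (simp_all add: mult.assoc)
  then show ?thesis using assms unfolding unit_pair_def is_subring_def by simp
qed

lemma conj_rel_equiv:
  assumes "is_subring B"
  shows "equiv (ring_homs A B) (conj_rel A B)"
proof (rule equivI)
  show "refl_on (ring_homs A B) (conj_rel A B)"
    unfolding refl_on_def conj_rel_iff using unit_pair_one[OF assms] by (force simp: conj_rel_def)
  show "sym (conj_rel A B)"
  proof (rule symI)
    fix f g assume "(f, g) \<in> conj_rel A B"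
    then obtain u v where homs: "f \<in> ring_homs A B" "g \<in> ring_homs A B"
      and uv: "unit_pair B u v" and g: "\<forall>x\<in>A. g x = u * f x * v"
      unfolding conj_rel_iff by blast
    have "\<forall>x\<in>A. f x = v * g x * u"
    proof
      fix x assume "x \<in> A"
      then have "v * g x * u = (v * u) * f x * (v * u)" using g by (simp add: mult.assoc)
      then show "f x = v * g x * u" using uv unfolding unit_pair_def by simp
    qed
    then show "(g, f) \<in> conj_rel A B" unfolding conj_rel_iff using homs unit_pair_swap[OF uv] by blast
  qed
  show "trans (conj_rel A B)"
  proof (rule transI)
    fix f g h assume "(f, g) \<in> conj_rel A B" "(g, h) \<in> conj_rel A B"
    then obtain u v u' v' where homs: "f \<in> ring_homs A B" "h \<in> ring_homs A B"
      and uv: "unit_pair B u v" "unit_pair B u' v'"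
      and "\<forall>x\<in>A. g x = u * f x * v" "\<forall>x\<in>A. h x = u' * g x * v'"
      unfolding conj_rel_iff by blast
    then have "\<forall>x\<in>A. h x = (u' * u) * f x * (v * v')" by (simp add: mult.assoc)
    then show "(f, h) \<in> conj_rel A B"
      unfolding conj_rel_iff using homs unit_pair_mult[OF assms uv] by blast
  qed
qed (auto simp: conj_rel_def)

lemma structures_mem_ring_homs:
  assumes B: "is_subring B" and c: "c \<in> structures A B" and f: "f \<in> c"
  shows "f \<in> ring_homs A B"
  using in_quotient_imp_subset[OF conj_rel_equiv[OF B]] c f unfolding structures_def by blast

lemma subring_of_nat_mult: "is_subring A \<Longrightarrow> x \<in> A \<Longrightarrow> of_nat n * x \<in> A"
proof (induction n)
  case (Suc n)
  then show ?case unfolding is_subring_def by (simp add: distrib_right)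
qed (simp add: is_subring_def)

lemma is_subring_gen_subring: "is_subring (gen_subring X)"
  unfolding gen_subring_def is_subring_def by auto

lemma gen_subring_least: "is_subring T \<Longrightarrow> X \<subseteq> T \<Longrightarrow> gen_subring X \<subseteq> T"
  unfolding gen_subring_def by auto

lemma gen_subring_superset: "X \<subseteq> gen_subring X"
  unfolding gen_subring_def by auto

lemma ring_homs_add: "f \<in> ring_homs A B \<Longrightarrow> x \<in> A \<Longrightarrow> y \<in> A \<Longrightarrow> f (x + y) = f x + f y"
  and ring_homs_mult: "f \<in> ring_homs A B \<Longrightarrow> x \<in> A \<Longrightarrow> y \<in> A \<Longrightarrow> f (x * y) = f x * f y"
  and ring_homs_one: "f \<in> ring_homs A B \<Longrightarrow> f 1 = 1"
  and ring_homs_in: "f \<in> ring_homs A B \<Longrightarrow> x \<in> A \<Longrightarrow> f x \<in> B"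
  unfolding ring_homs_def by auto

lemma ring_homs_diff:
  assumes "f \<in> ring_homs A B" "is_subring A" "x \<in> A" "y \<in> A"
  shows "f (x - y) = f x - f y"
proof -
  have "x - y \<in> A" using assms unfolding is_subring_def by blast
  then have "f (x - y + y) = f (x - y) + f y" using assms ring_homs_add by blast
  then show ?thesis by (simp add: algebra_simps)
qed

lemma ring_homs_zero: "f \<in> ring_homs A B \<Longrightarrow> is_subring A \<Longrightarrow> f 0 = 0"
  using ring_homs_diff[of f A B 0 0] by (simp add: is_subring_def)

lemma ring_homs_of_nat_mult:
  assumes "f \<in> ring_homs A B" "is_subring A" "x \<in> A"
  shows "f (of_nat n * x) = of_nat n * f x"
proof (induction n)
  case 0
  then show ?case using ring_homs_zero[OF assms(1,2)] by simp
next
  case (Suc n)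
  have "f (of_nat (Suc n) * x) = f (x + of_nat n * x)" by (simp add: algebra_simps)
  also have "\<dots> = f x + of_nat n * f x"
    using ring_homs_add[OF assms(1,3) subring_of_nat_mult[OF assms(2,3)]] Suc by simp
  finally show ?case by (simp add: algebra_simps)
qed

lemma is_subring_ring_homs_preimage:
  assumes f: "f \<in> ring_homs A B" and A: "is_subring A" and T: "is_subring T"
  shows "is_subring {x \<in> A. f x \<in> T}"
  using A T ring_homs_zero[OF f A] ring_homs_one[OF f] ring_homs_add[OF f] ring_homs_mult[OF f]
    ring_homs_diff[OF f A]
  unfolding is_subring_def by auto

lemma restrict_gen_subring_ring_homs:
  assumes f: "f \<in> ring_homs A B" and A: "is_subring A" and T: "is_subring T"
    and X: "X \<subseteq> A" "f ` X \<subseteq> T"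
  shows "restrict f (gen_subring X) \<in> ring_homs (gen_subring X) T"
proof -
  have sub: "gen_subring X \<subseteq> {x \<in> A. f x \<in> T}"
    by (rule gen_subring_least[OF is_subring_ring_homs_preimage[OF f A T]]) (use X in blast)
  have "\<forall>x\<in>gen_subring X. \<forall>y\<in>gen_subring X. f (x + y) = f x + f y \<and> f (x * y) = f x * f y"
    using sub ring_homs_add[OF f] ring_homs_mult[OF f] by blast
  then show ?thesis
    using sub ring_homs_one[OF f] is_subring_gen_subring[of X]
    unfolding ring_homs_def is_subring_def by auto
qed

lemma unit_pair_of_congruent_units:
  assumes R: "is_subring R" and R': "is_subring R'" and dR': "(\<lambda>r. of_nat d * r) ` R' \<subseteq> R"
    and u1: "unit_pair R' u1 v1" and u2: "unit_pair R' u2 v2"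
    and r: "r \<in> R'" "u1 - u2 = of_nat d * r"
  shows "unit_pair R (u2 * v1) (u1 * v2)"
proof -
  have "r * v1 \<in> R'" "r * v2 \<in> R'" using r u1 u2 R' unfolding unit_pair_def is_subring_def by auto
  then have d_mult: "of_nat d * (r * v1) \<in> R" "of_nat d * (r * v2) \<in> R" using dR' by auto
  have "u2 * v1 = (u1 - of_nat d * r) * v1" using r by (simp add: algebra_simps)
  also have "\<dots> = 1 - of_nat d * (r * v1)" using u1 by (simp add: unit_pair_def algebra_simps)
  finally have "u2 * v1 \<in> R" using d_mult R unfolding is_subring_def by auto
  moreover have "u1 * v2 = (u2 + of_nat d * r) * v2" using r by (simp add: algebra_simps)
  then have "u1 * v2 = 1 + of_nat d * (r * v2)" using u2 by (simp add: unit_pair_def algebra_simps)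
  then have "u1 * v2 \<in> R" using d_mult R unfolding is_subring_def by auto
  moreover have "u2 * v1 * (u1 * v2) = u2 * (v1 * u1) * v2" "u1 * v2 * (u2 * v1) = u1 * (v2 * u2) * v1"
    by (simp_all add: mult.assoc)
  ultimately show ?thesis using u1 u2 unfolding unit_pair_def by simp
qed

lemma conj_on_multiples_imp_conj:
  fixes f g :: "'k::ring_1 \<Rightarrow> 'a::ring_1" and y :: 'a
  assumes f: "f \<in> ring_homs A B" and g: "g \<in> ring_homs A B" and A: "is_subring A"
    and y: "y * of_nat d = 1"
    and conj: "\<forall>x\<in>A. g (of_nat d * x) = w * f (of_nat d * x) * w'"
  shows "\<forall>x\<in>A. g x = w * f x * w'"
proof
  fix x assume x: "x \<in> A"
  have "of_nat d * g x = g (of_nat d * x)" using ring_homs_of_nat_mult[OF g A x] by simp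
  also have "\<dots> = w * (of_nat d * f x) * w'" using conj x ring_homs_of_nat_mult[OF f A x] by simp
  also have "\<dots> = of_nat d * (w * f x * w')" by (metis mult.assoc mult_of_nat_commute)
  finally have "y * (of_nat d * g x) = y * (of_nat d * (w * f x * w'))" by simp
  then show "g x = w * f x * w'" using y by (simp flip: mult.assoc)
qed

lemma ex_inj_on_if_relation_determines:
  assumes "\<forall>x\<in>A. \<exists>y\<in>B. P x y"
    and "\<And>x x' y. x \<in> A \<Longrightarrow> x' \<in> A \<Longrightarrow> P x y \<Longrightarrow> P x' y \<Longrightarrow> x = x'"
  shows "\<exists>F. inj_on F A \<and> F ` A \<subseteq> B"
proof -
  define F where "F x = (SOME y. y \<in> B \<and> P x y)" for x
  have F: "F x \<in> B \<and> P x (F x)" if "x \<in> A" for x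
    unfolding F_def by (rule someI_ex) (use assms(1) that in blast)
  have "inj_on F A" by (rule inj_onI) (use F assms(2) in metis)
  then show ?thesis using F by blast
qed

definition cong_mod_mult :: "'a::ring_1 set \<Rightarrow> nat \<Rightarrow> ('a \<times> 'a) set" where
  "cong_mod_mult B d = {(x, y). x \<in> B \<and> y \<in> B \<and> (\<exists>r\<in>B. x - y = of_nat d * r)}"

lemma quot_mult_eq: "quot_mult B d = B // cong_mod_mult B d"
  unfolding quot_mult_def cong_mod_mult_def ..

text \<open>The data \<open>(u mod dR', [f])\<close> of the idea above. It depends on the choice of the
  representative \<open>f\<close>, hence a relation rather than a function.\<close>
definition restriction_invariant ::
    "'k::ring_1 set \<Rightarrow> 'a::ring_1 set \<Rightarrow> nat \<Rightarrow> ('k \<Rightarrow> 'a) set \<Rightarrow> 'a set \<times> ('k \<Rightarrow> 'a) set \<Rightarrow> bool"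
  where "restriction_invariant G' R' d c p \<longleftrightarrow> (\<exists>f\<in>c. \<exists>u v. unit_pair R' u v \<and>
      snd p = conj_rel G' R' `` {restrict f G'} \<and> fst p = cong_mod_mult R' d `` {u} \<and>
      (\<forall>x\<in>G'. f x = u * (SOME h. h \<in> snd p) x * v))"

lemma ex_restriction_invariant:
  fixes R R' :: "'a::ring_1 set" and \<Gamma> :: "'k::ring_1 set" and d :: nat
  defines "G' \<equiv> gen_subring ((\<lambda>g. of_nat d * g) ` \<Gamma>)"
  assumes \<Gamma>: "is_subring \<Gamma>" and R: "is_subring R" and R': "is_subring R'"
    and dR: "(\<lambda>r. of_nat d * r) ` R \<subseteq> R'"
    and c: "c \<in> structures \<Gamma> R"
  shows "\<exists>p \<in> quot_mult R' d \<times> structures G' R'. restriction_invariant G' R' d c p"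
proof -
  obtain f where f: "f \<in> c"
    using in_quotient_imp_non_empty[OF conj_rel_equiv[OF R]] c unfolding structures_def by blast
  have f_hom: "f \<in> ring_homs \<Gamma> R" by (rule structures_mem_ring_homs[OF R c f])
  have "(\<lambda>g. of_nat d * g) ` \<Gamma> \<subseteq> \<Gamma>" using subring_of_nat_mult[OF \<Gamma>] by blast
  moreover have "f ` (\<lambda>g. of_nat d * g) ` \<Gamma> \<subseteq> R'"
    using ring_homs_of_nat_mult[OF f_hom \<Gamma>] ring_homs_in[OF f_hom] dR by auto
  ultimately have res: "restrict f G' \<in> ring_homs G' R'"
    unfolding G'_def by (rule restrict_gen_subring_ring_homs[OF f_hom \<Gamma> R'])
  define C where "C = conj_rel G' R' `` {restrict f G'}"
  note equiv' = conj_rel_equiv[OF R', of G']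
  have C: "C \<in> structures G' R'" unfolding C_def structures_def using res by (rule quotientI)
  have "(SOME h. h \<in> C) \<in> C"
    by (rule someI[of _ "restrict f G'"]) (use equiv_class_self[OF equiv' res] C_def in blast)
  then have "((SOME h. h \<in> C), restrict f G') \<in> conj_rel G' R'"
    using equiv' unfolding C_def equiv_def by (auto elim: symE)
  then obtain u v where uv: "unit_pair R' u v"
    and conj: "\<forall>x\<in>G'. f x = u * (SOME h. h \<in> C) x * v"
    unfolding conj_rel_iff by auto
  have "cong_mod_mult R' d `` {u} \<in> quot_mult R' d"
    unfolding quot_mult_eq using uv unfolding unit_pair_def by (blast intro: quotientI)
  moreover have "restriction_invariant G' R' d c (cong_mod_mult R' d `` {u}, C)"
    unfolding restriction_invariant_def using f uv conj C_def by auto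
  ultimately show ?thesis using C by blast
qed

lemma restriction_invariant_determines_structure:
  fixes R R' :: "'a::ring_1 set" and \<Gamma> G' :: "'k::ring_1 set" and d :: nat and y :: 'a
  assumes \<Gamma>: "is_subring \<Gamma>" and R: "is_subring R" and R': "is_subring R'"
    and y: "y * of_nat d = 1"
    and dR': "(\<lambda>r. of_nat d * r) ` R' \<subseteq> R" and d\<Gamma>: "(\<lambda>g. of_nat d * g) ` \<Gamma> \<subseteq> G'"
    and c1: "c1 \<in> structures \<Gamma> R" and c2: "c2 \<in> structures \<Gamma> R"
    and inv1: "restriction_invariant G' R' d c1 p" and inv2: "restriction_invariant G' R' d c2 p"
  shows "c1 = c2"
proof -
  define h where "h = (SOME h. h \<in> snd p)"
  obtain f1 u1 v1 where f1: "f1 \<in> c1" and uv1: "unit_pair R' u1 v1"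
    and u1: "fst p = cong_mod_mult R' d `` {u1}" and conj1: "\<forall>x\<in>G'. f1 x = u1 * h x * v1"
    using inv1 unfolding restriction_invariant_def h_def by blast
  obtain f2 u2 v2 where f2: "f2 \<in> c2" and uv2: "unit_pair R' u2 v2"
    and u2: "fst p = cong_mod_mult R' d `` {u2}" and conj2: "\<forall>x\<in>G'. f2 x = u2 * h x * v2"
    using inv2 unfolding restriction_invariant_def h_def by blast
  have "(u2, u2) \<in> cong_mod_mult R' d"
    using uv2 R' unfolding cong_mod_mult_def unit_pair_def is_subring_def by (auto intro!: bexI[of _ 0])
  then have "(u1, u2) \<in> cong_mod_mult R' d" using u1 u2 by (metis Image_singleton_iff)
  then obtain r where r: "r \<in> R'" "u1 - u2 = of_nat d * r" unfolding cong_mod_mult_def by blast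
  define w w' where "w = u2 * v1" and "w' = u1 * v2"
  have w: "unit_pair R w w'"
    unfolding w_def w'_def by (rule unit_pair_of_congruent_units[OF R R' dR' uv1 uv2 r])
  have "\<forall>x\<in>G'. f2 x = w * f1 x * w'"
  proof
    fix x assume "x \<in> G'"
    then have "w * f1 x * w' = u2 * (v1 * u1) * h x * (v1 * u1) * v2"
      using conj1 unfolding w_def w'_def by (simp add: mult.assoc)
    then show "f2 x = w * f1 x * w'" using uv1 conj2 \<open>x \<in> G'\<close> by (simp add: unit_pair_def)
  qed
  then have "\<forall>x\<in>\<Gamma>. f2 (of_nat d * x) = w * f1 (of_nat d * x) * w'" using d\<Gamma> by blast
  moreover have homs: "f1 \<in> ring_homs \<Gamma> R" "f2 \<in> ring_homs \<Gamma> R"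
    using structures_mem_ring_homs[OF R c1 f1] structures_mem_ring_homs[OF R c2 f2] by blast+
  ultimately have "\<forall>x\<in>\<Gamma>. f2 x = w * f1 x * w'"
    by (intro conj_on_multiples_imp_conj[OF homs \<Gamma> y])
  then have "(f1, f2) \<in> conj_rel \<Gamma> R" unfolding conj_rel_iff using homs w by blast
  then show "c1 = c2"
    using quotient_eq_iff[OF conj_rel_equiv[OF R] _ _ f1 f2] c1 c2 unfolding structures_def by blast
qed

theorem proposition10p8:
  fixes R R' :: "'a::ring_1 set" and \<Gamma> :: "'k::field_char_0 set" and d :: nat
  assumes "Q_algebra TYPE('a)"
    and "is_subring R" and "is_subring R'"
    and "number_field TYPE('k)" and "is_order \<Gamma>"
    and "d \<ge> 1"
    and "(\<lambda>r. of_nat d * r) ` R' \<subseteq> R"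
    and "(\<lambda>r. of_nat d * r) ` R \<subseteq> R'"
  shows "\<exists>F. inj_on F (structures \<Gamma> R) \<and>
           F ` structures \<Gamma> R \<subseteq>
             quot_mult R' d \<times> structures (gen_subring ((\<lambda>g. of_nat d * g) ` \<Gamma>)) R'"
proof -
  let ?G' = "gen_subring ((\<lambda>g. of_nat d * g) ` \<Gamma>)"
  have \<Gamma>: "is_subring \<Gamma>" using assms(5) unfolding is_order_def by blast
  obtain y :: 'a where y: "y * of_nat d = 1"
    using assms(1,6) unfolding Q_algebra_def by (meson less_le_trans zero_less_one)
  show ?thesis
  proof (rule ex_inj_on_if_relation_determines[where P = "restriction_invariant ?G' R' d"])
    show "\<forall>c\<in>structures \<Gamma> R. \<exists>p\<in>quot_mult R' d \<times> structures ?G' R'. restriction_invariant ?G' R' d c p"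
      using ex_restriction_invariant[OF \<Gamma> assms(2,3,8)] by blast
    show "c1 = c2" if "c1 \<in> structures \<Gamma> R" "c2 \<in> structures \<Gamma> R"
      "restriction_invariant ?G' R' d c1 p" "restriction_invariant ?G' R' d c2 p" for c1 c2 p
      using restriction_invariant_determines_structure[OF \<Gamma> assms(2,3) y assms(7)
          gen_subring_superset that] .
  qed
qed

end
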